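(* Assume the Setup below (with $G$ possibly different from $G_\circ$), that $G_\circ$ is a dynamic causal graph for $(Y_1,Y_0)$ given $\mathscr G_\circ$, that $v^2>0$ almost surely, that the Unconfoundedness Condition (A) holds, and that the Nonnegative Spillover Condition holds. Then $D\ge C_G$ almost surely.
   Context: Setup. $N$ is a finite set of units, $n=|N|$. For $i\in N$ and $t\in\{0,1\}$, $Y_{i,t}\in\{0,1\}$ are binary outcomes; $Y_1=(Y_{i,1})_{i\in N}$, $Y_0=(Y_{j,0})_{j\in N}$, and for $A\subset N$, $Y_{A,t}=(Y_{i,t})_{i\in A}$. $G_\circ=(N,E_\circ)$ is a (possibly latent) directed graph with $E_\circ\subset\{ij:i,j\in N,i\neq j\}$ (an edge $ij$ means $Y_{j,0}$ causally affects $Y_{i,1}$); $G=(N,E_G)$ is an observed directed graph with $E_G\subset\{ij:i\ne j\}$. Write $N_\circ(i)=\{j:ij\in E_\circ\}$, $\overline N_\circ(i)=N_\circ(i)\cup\{i\}$, $N_\circ(A)=\bigcup_{i\in A}N_\circ(i)$, $\overline N_\circ(A)=N_\circ(A)\cup A$, $d_\circ(i)=|N_\circ(i)|$, and similarly $N_G(i)=\{j:ij\in E_G\}$, $\overline N_G(i)=N_G(i)\cup\{i\}$. $X=(X_i)_{i\in N}$, $X_i\in\mathbb R^p$, are observed covariates. $\mathscr G=\sigma(X,G)$ and $\mathscr G_\circ=\sigma(X,G,G_\circ)$; $\mathbf E_{\mathscr H},\mathrm{Var}_{\mathscr H},\mathrm{Cov}_{\mathscr H}$ denote conditional expectation/variance/covariance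 given a $\sigma$-field $\mathscr H$. Dynamic causal graph: $G_\circ$ is a dynamic causal graph for $(Y_1,Y_0)$ given $\mathscr G_\circ$ if for any pairwise disjoint $A,B,A',B'\subset N$ with $(\overline N_\circ(A)\cup B)\cap(\overline N_\circ(A')\cup B')=\varnothing$, the vectors $(Y_{A,1},Y_{B\cup\overline N_\circ(A),0})$ and $(Y_{A',1},Y_{B'\cup\overline N_\circ(A'),0})$ are conditionally independent given $\mathscr G_\circ$. Potential outcomes: for each $i$, writing $N_\circ(i)=\{j_1,\dots,j_{d_\circ(i)}\}$, there is a map $\rho_i(\cdot;U_{i,1}):\{0,1\}^{d_\circ(i)+1}\to\{0,1\}$ with $U_{i,1}$ a random vector, and $Y_{i,1}=\rho_i(Y_{i,0},Y_{j_1,0},\dots,Y_{j_{d_\circ(i)},0};U_{i,1})$. For $j_k\in N_\circ(i)$ and $d\in\{0,1\}$, $Y^*_{ij_k}(d)=\rho_i(Y_{i,0},Y_{j_1,0},\dots,Y_{j_{k-1},0},d,Y_{j_{k+1},0},\dots,Y_{j_{d_\circ(i)},0};U_{i,1})$. Parameters: $\mu_{j,0}=\mathbf E_{\mathscr G_\circ}[Y_{j,0}]$, $v^2=\frac1n\sum_{j\in N}\mu_{j,0}(1-\mu_{j,0})$, $w_j=\mu_{j,0}(1-\mu_{j,0})/\sum_{\ell\in N}\mu_{\ell,0}(1-\mu_{\ell,0})$. $\tau_j=\sum_{i:ij\in E_\circ}\mathbf E_{\mathscr G_\circ}[Y^*_{ij}(1)-Y^*_{ij}(0)]$ and $D=\sum_{j\in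 N}w_j\tau_j$. $C_G=\frac{1}{nv^2}\sum_{i\in N}\sum_{j:ij\in E_G}\mathrm{Cov}_{\mathscr G_\circ}(Y_{i,1},Y_{j,0})$. Unconfoundedness Condition (A): for each $ij\in E_\circ$, $(Y^*_{ij}(1),Y^*_{ij}(0),G_\circ)$ is conditionally independent of $Y_{j,0}$ given $\mathscr G$. Nonnegative Spillover Condition: for each $j\in N$, $P\big\{\sum_{i\in N:\,ij\in E_\circ\setminus E_G}(Y^*_{ij}(1)-Y^*_{ij}(0))\ge 0\big\}=1$. *)

theory Defs
  imports "HOL-Probability.Probability"
begin

(* An edge ij is the pair (i,j); (i,j) \<in> E means Y_{j,0} may affect Y_{i,1}. *)

definition nbh :: "('a \<times> 'a) set \<Rightarrow> 'a \<Rightarrow> 'a set" where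
  "nbh E i = {j. (i, j) \<in> E}"

definition nbh_set_bar :: "('a \<times> 'a) set \<Rightarrow> 'a set \<Rightarrow> 'a set" where
  "nbh_set_bar E A = (\<Union>i\<in>A. nbh E i) \<union> A"

definition sigma_XG :: "'w measure \<Rightarrow> 'a set \<Rightarrow> ('a \<Rightarrow> 'w \<Rightarrow> real ^ 'p)
    \<Rightarrow> ('w \<Rightarrow> ('a \<times> 'a) set) \<Rightarrow> 'w measure" where
  "sigma_XG M N X EG = vimage_algebra (space M) (\<lambda>w. ((\<lambda>i\<in>N. X i w), EG w))
      ((\<Pi>\<^sub>M i\<in>N. borel) \<Otimes>\<^sub>M count_space UNIV)"

definition sigma_XGG :: "'w measure \<Rightarrow> 'a set \<Rightarrow> ('a \<Rightarrow> 'w \<Rightarrow> real ^ 'p)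
    \<Rightarrow> ('w \<Rightarrow> ('a \<times> 'a) set) \<Rightarrow> ('w \<Rightarrow> ('a \<times> 'a) set) \<Rightarrow> 'w measure" where
  "sigma_XGG M N X EG E0 = vimage_algebra (space M) (\<lambda>w. (((\<lambda>i\<in>N. X i w), EG w), E0 w))
      (((\<Pi>\<^sub>M i\<in>N. borel) \<Otimes>\<^sub>M count_space UNIV) \<Otimes>\<^sub>M count_space UNIV)"

definition cond_cov :: "'w measure \<Rightarrow> 'w measure \<Rightarrow> ('w \<Rightarrow> real) \<Rightarrow> ('w \<Rightarrow> real) \<Rightarrow> 'w \<Rightarrow> real" where
  "cond_cov M F f g w = real_cond_exp M F (\<lambda>x. f x * g x) w
      - real_cond_exp M F f w * real_cond_exp M F g w"

definition cond_indep_on :: "'w measure \<Rightarrow> 'w measure \<Rightarrow> ('w \<Rightarrow> bool) \<Rightarrow> ('w \<Rightarrow> 'u) \<Rightarrow> ('w \<Rightarrow> 'v) \<Rightarrow> bool" where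
  "cond_indep_on M F P U V \<longleftrightarrow> (\<forall>S T. AE w in M. P w \<longrightarrow>
      real_cond_exp M F (\<lambda>x. indicator S (U x) * indicator T (V x)) w
      = real_cond_exp M F (\<lambda>x. indicator S (U x)) w * real_cond_exp M F (\<lambda>x. indicator T (V x)) w)"

definition cond_indep :: "'w measure \<Rightarrow> 'w measure \<Rightarrow> ('w \<Rightarrow> 'u) \<Rightarrow> ('w \<Rightarrow> 'v) \<Rightarrow> bool" where
  "cond_indep M F U V \<longleftrightarrow> cond_indep_on M F (\<lambda>_. True) U V"

definition dynamic_causal_graph :: "'w measure \<Rightarrow> 'w measure \<Rightarrow> 'a set \<Rightarrow> ('w \<Rightarrow> ('a \<times> 'a) set)
    \<Rightarrow> ('a \<Rightarrow> 'w \<Rightarrow> bool) \<Rightarrow> ('a \<Rightarrow> 'w \<Rightarrow> bool) \<Rightarrow> bool" where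
  "dynamic_causal_graph M F0 N E0 Y1 Y0 \<longleftrightarrow>
    (\<forall>A B A' B' e. A \<subseteq> N \<and> B \<subseteq> N \<and> A' \<subseteq> N \<and> B' \<subseteq> N \<and>
       A \<inter> B = {} \<and> A \<inter> A' = {} \<and> A \<inter> B' = {} \<and> B \<inter> A' = {} \<and> B \<inter> B' = {} \<and> A' \<inter> B' = {} \<and>
       (nbh_set_bar e A \<union> B) \<inter> (nbh_set_bar e A' \<union> B') = {} \<longrightarrow>
       cond_indep_on M F0 (\<lambda>w. E0 w = e)
         (\<lambda>w. (restrict (\<lambda>k. Y1 k w) A, restrict (\<lambda>k. Y0 k w) (B \<union> nbh_set_bar e A)))
         (\<lambda>w. (restrict (\<lambda>k. Y1 k w) A', restrict (\<lambda>k. Y0 k w) (B' \<union> nbh_set_bar e A'))))"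

(* Potential outcome Y*_{ij}(d): rho i y w is the period-1 outcome of unit i when the period-0
   outcome vector is y (rho i \<cdot> w plays the role of rho_i(\<cdot>; U_{i,1})). *)
definition pot_out :: "('a \<Rightarrow> ('a \<Rightarrow> bool) \<Rightarrow> 'w \<Rightarrow> bool) \<Rightarrow> ('a \<Rightarrow> 'w \<Rightarrow> bool)
    \<Rightarrow> 'a \<Rightarrow> 'a \<Rightarrow> bool \<Rightarrow> 'w \<Rightarrow> bool" where
  "pot_out rho Y0 i j d w = rho i ((\<lambda>k. Y0 k w)(j := d)) w"

end

theory Submission
  imports Defs
begin

text \<open>On an edge \<open>(i, j)\<close> of \<open>E0\<close> the outcome \<open>Y1 i\<close> equals the potential outcome
  \<open>Ystar i j (Y0 j)\<close>. Unconfoundedness is stated given \<open>F = \<sigma>(X, G)\<close> only, but as \<open>E0\<close> is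
  discrete and is recorded alongside the potential outcomes, \<open>E[Y0 j | F]\<close> still factors out of
  \<open>E[Y0 j * Ystar i j d | F0]\<close>. Hence on an edge the conditional covariance of \<open>Y1 i\<close> and
  \<open>Y0 j\<close> is \<open>\<mu>\<^sub>j (1 - \<mu>\<^sub>j) E[Ystar i j True - Ystar i j False | F0]\<close>, while off \<open>E0\<close> the dynamic
  causal graph makes it vanish. So \<open>n v\<^sup>2 C\<^sub>G\<close> is the \<open>\<mu>(1 - \<mu>)\<close>-weighted sum of the effects
  along the edges of \<open>E0\<close> that \<open>EG\<close> contains, and the nonnegative spillover along the edges
  it misses bounds this by \<open>n v\<^sup>2 D\<close>.\<close>

lemma (in finite_measure) integrable_abs_le:
  fixes f :: "'a \<Rightarrow> real"
  assumes "f \<in> borel_measurable M" and "\<And>x. x \<in> space M \<Longrightarrow> \<bar>f x\<bar> \<le> c"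
  shows "integrable M f"
  using assms by (intro integrable_const_bound[where B=c]) auto

lemma indicator_eq_sum_slices:
  assumes R: "finite R" "Z x \<in> R" and x: "x \<in> S"
    and slice: "\<And>z. B \<inter> {x\<in>S. Z x = z} = C z \<inter> {x\<in>S. Z x = z}"
  shows "indicator B x = (\<Sum>z\<in>R. indicator (C z) x * of_bool (Z x = z) :: real)"
proof -
  have "(\<Sum>z\<in>R. indicator (C z) x * of_bool (Z x = z) :: real) = indicator (C (Z x)) x"
    using R by (simp add: of_bool_def if_distrib cong: if_cong)
  also have "\<dots> = indicator B x" using slice[of "Z x"] x by (auto simp: indicator_def)
  finally show ?thesis by simp
qed

context finite_measure_subalgebra
begin

lemma real_cond_exp_bounds:
  fixes f :: "'a \<Rightarrow> real"
  assumes f: "f \<in> borel_measurable M" and bounds: "\<And>x. x \<in> space M \<Longrightarrow> a \<le> f x \<and> f x \<le> b"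
  shows "AE x in M. a \<le> real_cond_exp M F f x \<and> real_cond_exp M F f x \<le> b"
proof -
  have "integrable M f"
    using bounds by (intro integrable_abs_le[OF f, of "max \<bar>a\<bar> \<bar>b\<bar>"]) fastforce
  then have "AE x in M. a \<le> real_cond_exp M F f x" "AE x in M. real_cond_exp M F f x \<le> b"
    using bounds by (auto intro!: real_cond_exp_ge_c real_cond_exp_le_c)
  then show ?thesis by eventually_elim simp
qed

lemma real_cond_exp_abs_le:
  fixes f :: "'a \<Rightarrow> real"
  assumes "f \<in> borel_measurable M" and "\<And>x. x \<in> space M \<Longrightarrow> \<bar>f x\<bar> \<le> c"
  shows "AE x in M. \<bar>real_cond_exp M F f x\<bar> \<le> c"
proof -
  have "AE x in M. - c \<le> real_cond_exp M F f x \<and> real_cond_exp M F f x \<le> c"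
    using assms by (intro real_cond_exp_bounds) (auto simp: abs_le_iff minus_le_iff)
  then show ?thesis by eventually_elim (simp add: abs_le_iff)
qed

lemma integrable_indicator_mult_cond_exp:
  fixes Y f :: "'a \<Rightarrow> real"
  assumes A: "A \<in> sets M"
    and Y: "Y \<in> borel_measurable M" "\<And>x. x \<in> space M \<Longrightarrow> \<bar>Y x\<bar> \<le> 1"
    and f: "f \<in> borel_measurable M" "\<And>x. x \<in> space M \<Longrightarrow> \<bar>f x\<bar> \<le> 1"
  shows "integrable M (\<lambda>x. indicator A x * real_cond_exp M F Y x * f x)"
proof (rule integrable_const_bound[where B=1])
  have "AE x in M. \<bar>real_cond_exp M F Y x\<bar> \<le> 1" using Y by (rule real_cond_exp_abs_le)
  then show "AE x in M. norm (indicator A x * real_cond_exp M F Y x * f x) \<le> 1"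
  proof (rule AE_mp, intro AE_I2 impI)
    fix x assume "x \<in> space M" "\<bar>real_cond_exp M F Y x\<bar> \<le> 1"
    then show "norm (indicator A x * real_cond_exp M F Y x * f x) \<le> 1"
      using f(2) by (auto simp: abs_mult indicator_def intro: mult_le_one)
  qed
qed (use A f in measurable)

lemma integral_indicator_mult_cond_indep:
  fixes J Y :: "'a \<Rightarrow> real"
  assumes C: "C \<in> sets F"
    and J: "J \<in> borel_measurable M" "\<And>x. x \<in> space M \<Longrightarrow> \<bar>J x\<bar> \<le> 1"
    and Y: "Y \<in> borel_measurable M" "\<And>x. x \<in> space M \<Longrightarrow> \<bar>Y x\<bar> \<le> 1"
    and indep: "AE x in M. real_cond_exp M F (\<lambda>x. J x * Y x) x
                  = real_cond_exp M F J x * real_cond_exp M F Y x"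
  shows "(\<integral>x. indicator C x * (J x * Y x) \<partial>M)
       = (\<integral>x. indicator C x * real_cond_exp M F Y x * J x \<partial>M)"
proof -
  have C_M [measurable]: "C \<in> sets M" using C subalg by (auto simp: subalgebra_def)
  have "(\<integral>x. indicator C x * (J x * Y x) \<partial>M)
      = (\<integral>x. indicator C x * real_cond_exp M F (\<lambda>x. J x * Y x) x \<partial>M)"
    using C C_M J Y
    by (intro real_cond_exp_intg(2)[symmetric] integrable_abs_le[of _ 1])
       (auto simp: abs_mult indicator_def intro: mult_le_one)
  also have "\<dots> = (\<integral>x. indicator C x * real_cond_exp M F Y x * real_cond_exp M F J x \<partial>M)"
    using indep by (intro integral_cong_AE) (auto elim!: eventually_mono)
  also have "\<dots> = (\<integral>x. indicator C x * real_cond_exp M F Y x * J x \<partial>M)"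
    using C C_M J Y by (intro real_cond_exp_intg(2) integrable_indicator_mult_cond_exp) auto
  finally show ?thesis .
qed

lemma integral_indicator_mult_refined_by_discrete:
  fixes Y h :: "'a \<Rightarrow> real" and Z :: "'a \<Rightarrow> 'b"
  assumes Z: "Z \<in> measurable M (count_space UNIV)" "finite R" "\<And>x. x \<in> space M \<Longrightarrow> Z x \<in> R"
    and B: "B \<in> sets M" and C: "\<And>z. C z \<in> sets F"
    and slice: "\<And>z. B \<inter> {x\<in>space M. Z x = z} = C z \<inter> {x\<in>space M. Z x = z}"
    and Y: "Y \<in> borel_measurable M" "\<And>x. x \<in> space M \<Longrightarrow> \<bar>Y x\<bar> \<le> 1"
    and h: "h \<in> borel_measurable M" "\<And>x. x \<in> space M \<Longrightarrow> \<bar>h x\<bar> \<le> 1"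
    and indep: "\<And>z. AE x in M.
      real_cond_exp M F (\<lambda>x. of_bool (Z x = z) * h x * Y x) x
        = real_cond_exp M F (\<lambda>x. of_bool (Z x = z) * h x) x * real_cond_exp M F Y x"
  shows "(\<integral>x. indicator B x * (Y x * h x) \<partial>M) = (\<integral>x. indicator B x * real_cond_exp M F Y x * h x \<partial>M)"
proof -
  let ?g = "real_cond_exp M F Y"
  define J where "J z x = of_bool (Z x = z) * h x" for z x
  have [measurable]: "Z \<in> measurable M (count_space UNIV)" "h \<in> borel_measurable M"
    by (fact Z h)+
  have J_M: "J z \<in> borel_measurable M" for z unfolding J_def by measurable
  have J_bound: "\<bar>J z x\<bar> \<le> 1" if "x \<in> space M" for z x using h(2)[OF that] by (simp add: J_def)
  have C_M: "C z \<in> sets M" for z using C subalg by (auto simp: subalgebra_def)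
  have B_split: "indicator B x = (\<Sum>z\<in>R. indicator (C z) x * of_bool (Z x = z) :: real)"
    if "x \<in> space M" for x
    by (rule indicator_eq_sum_slices[OF Z(2) Z(3)[OF that] that slice])
  have "(\<integral>x. indicator B x * (Y x * h x) \<partial>M) = (\<integral>x. (\<Sum>z\<in>R. indicator (C z) x * (J z x * Y x)) \<partial>M)"
    by (rule Bochner_Integration.integral_cong)
       (auto simp: B_split sum_distrib_left sum_distrib_right J_def ac_simps)
  also have "\<dots> = (\<Sum>z\<in>R. \<integral>x. indicator (C z) x * (J z x * Y x) \<partial>M)"
    using C_M J_M J_bound Y
    by (intro Bochner_Integration.integral_sum integrable_abs_le[of _ 1])
       (auto simp: abs_mult indicator_def intro: mult_le_one)
  also have "\<dots> = (\<Sum>z\<in>R. \<integral>x. indicator (C z) x * ?g x * J z x \<partial>M)"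
    using C J_M J_bound Y indep by (intro sum.cong refl integral_indicator_mult_cond_indep) (auto simp: J_def)
  also have "\<dots> = (\<integral>x. (\<Sum>z\<in>R. indicator (C z) x * ?g x * J z x) \<partial>M)"
    using C_M J_M J_bound Y
    by (intro Bochner_Integration.integral_sum[symmetric] integrable_indicator_mult_cond_exp) auto
  also have "\<dots> = (\<integral>x. indicator B x * ?g x * h x \<partial>M)"
    by (rule Bochner_Integration.integral_cong)
       (auto simp: B_split sum_distrib_left sum_distrib_right J_def ac_simps)
  finally show ?thesis .
qed

end

text \<open>The hypothesis \<open>slice\<close> says that \<open>F0\<close> is generated by \<open>F\<close> and the discrete \<open>Z\<close>.\<close>
lemma (in finite_measure) real_cond_exp_mult_refined_by_discrete:
  fixes Y h :: "'a \<Rightarrow> real" and Z :: "'a \<Rightarrow> 'b"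
  assumes sub_F0: "subalgebra M F0" and sub_F: "subalgebra F0 F"
    and Z: "Z \<in> measurable M (count_space UNIV)" "finite R" "\<And>x. x \<in> space M \<Longrightarrow> Z x \<in> R"
    and slice: "\<And>B z. B \<in> sets F0 \<Longrightarrow>
      \<exists>C\<in>sets F. B \<inter> {x\<in>space M. Z x = z} = C \<inter> {x\<in>space M. Z x = z}"
    and Y: "Y \<in> borel_measurable M" "\<And>x. x \<in> space M \<Longrightarrow> \<bar>Y x\<bar> \<le> 1"
    and h: "h \<in> borel_measurable M" "\<And>x. x \<in> space M \<Longrightarrow> \<bar>h x\<bar> \<le> 1"
    and indep: "\<And>z. AE x in M.
      real_cond_exp M F (\<lambda>x. of_bool (Z x = z) * h x * Y x) x
        = real_cond_exp M F (\<lambda>x. of_bool (Z x = z) * h x) x * real_cond_exp M F Y x"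
  shows "AE x in M. real_cond_exp M F0 (\<lambda>x. Y x * h x) x
           = real_cond_exp M F Y x * real_cond_exp M F0 h x"
proof -
  interpret F0: finite_measure_subalgebra M F0 by unfold_locales (rule sub_F0)
  interpret F: finite_measure_subalgebra M F
    by unfold_locales (use sub_F0 sub_F in \<open>auto simp: subalgebra_def\<close>)
  let ?g = "real_cond_exp M F Y" and ?k = "real_cond_exp M F0 h"
  have g_F0: "?g \<in> borel_measurable F0"
    by (rule measurable_from_subalg[OF sub_F borel_measurable_cond_exp])
  show ?thesis
  proof (rule F0.real_cond_exp_charact)
    fix B assume B: "B \<in> sets F0"
    then have B_M: "B \<in> sets M" using sub_F0 by (auto simp: subalgebra_def)
    obtain C where C: "\<And>z. C z \<in> sets F"
      "\<And>z. B \<inter> {x\<in>space M. Z x = z} = C z \<inter> {x\<in>space M. Z x = z}"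
      using slice[OF B] by metis
    have "(\<integral>x\<in>B. Y x * h x \<partial>M) = (\<integral>x. indicator B x * ?g x * h x \<partial>M)"
      using F.integral_indicator_mult_refined_by_discrete[OF Z B_M C Y h indep]
      by (simp add: set_lebesgue_integral_def)
    also have "\<dots> = (\<integral>x. indicator B x * ?g x * ?k x \<partial>M)"
      using B B_M g_F0 Y h
      by (intro F0.real_cond_exp_intg(2)[symmetric] F.integrable_indicator_mult_cond_exp) auto
    finally show "(\<integral>x\<in>B. Y x * h x \<partial>M) = (\<integral>x\<in>B. ?g x * ?k x \<partial>M)"
      by (simp add: set_lebesgue_integral_def ac_simps)
  next
    show "integrable M (\<lambda>x. Y x * h x)"
      using Y h by (intro integrable_abs_le[of _ 1]) (auto simp: abs_mult intro: mult_le_one)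
    have "AE x in M. \<bar>?g x\<bar> \<le> 1" using Y by (rule F.real_cond_exp_abs_le)
    moreover have "AE x in M. \<bar>?k x\<bar> \<le> 1" using h by (rule F0.real_cond_exp_abs_le)
    ultimately have "AE x in M. \<bar>?g x * ?k x\<bar> \<le> 1"
      by eventually_elim (auto simp: abs_mult intro: mult_le_one)
    then show "integrable M (\<lambda>x. ?g x * ?k x)" by (intro integrable_const_bound[where B=1]) auto
    show "(\<lambda>x. ?g x * ?k x) \<in> borel_measurable F0" using g_F0 by measurable
  qed
qed

lemma subalgebra_vimage_algebra:
  assumes "f \<in> measurable M N"
  shows "subalgebra M (vimage_algebra (space M) f N)"
  using sets_image_in_sets[OF refl assms] by (simp add: subalgebra_def)

lemma measurable_vimage_algebra_pair:
  assumes "f \<in> X \<rightarrow> space A" and "g \<in> X \<rightarrow> space B"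
  shows "f \<in> measurable (vimage_algebra X (\<lambda>x. (f x, g x)) (A \<Otimes>\<^sub>M B)) A"
    and "g \<in> measurable (vimage_algebra X (\<lambda>x. (f x, g x)) (A \<Otimes>\<^sub>M B)) B"
proof -
  have "(\<lambda>x. (f x, g x)) \<in> measurable (vimage_algebra X (\<lambda>x. (f x, g x)) (A \<Otimes>\<^sub>M B)) (A \<Otimes>\<^sub>M B)"
    using assms by (intro measurable_vimage_algebra1) (auto simp: space_pair_measure)
  from measurable_compose[OF this measurable_fst] measurable_compose[OF this measurable_snd]
  show "f \<in> measurable (vimage_algebra X (\<lambda>x. (f x, g x)) (A \<Otimes>\<^sub>M B)) A"
    and "g \<in> measurable (vimage_algebra X (\<lambda>x. (f x, g x)) (A \<Otimes>\<^sub>M B)) B"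
    by simp_all
qed

lemma subalgebra_vimage_algebra_pair:
  assumes "f \<in> X \<rightarrow> space A" and "g \<in> X \<rightarrow> space B"
  shows "subalgebra (vimage_algebra X (\<lambda>x. (f x, g x)) (A \<Otimes>\<^sub>M B)) (vimage_algebra X f A)"
  using sets_image_in_sets[OF _ measurable_vimage_algebra_pair(1)[OF assms]]
  by (simp add: subalgebra_def)

lemma vimage_algebra_pair_count_space_slice:
  assumes f: "f \<in> X \<rightarrow> space A"
    and B: "B \<in> sets (vimage_algebra X (\<lambda>x. (f x, g x)) (A \<Otimes>\<^sub>M count_space UNIV))"
  shows "\<exists>C\<in>sets (vimage_algebra X f A). B \<inter> {x\<in>X. g x = z} = C \<inter> {x\<in>X. g x = z}"
proof -
  have "(\<lambda>x. (f x, g x)) \<in> X \<rightarrow> space (A \<Otimes>\<^sub>M count_space UNIV)"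
    using f by (auto simp: space_pair_measure)
  then obtain D where D: "D \<in> sets (A \<Otimes>\<^sub>M count_space UNIV)" "B = (\<lambda>x. (f x, g x)) -` D \<inter> X"
    using B by (auto simp: sets_vimage_algebra2)
  have "(\<lambda>x. (f x, z)) \<in> measurable (vimage_algebra X f A) (A \<Otimes>\<^sub>M count_space UNIV)"
    using f by (intro measurable_Pair measurable_vimage_algebra1) auto
  from measurable_sets[OF this D(1)]
  have "(\<lambda>x. (f x, z)) -` D \<inter> X \<in> sets (vimage_algebra X f A)" by simp
  moreover have "B \<inter> {x\<in>X. g x = z} = ((\<lambda>x. (f x, z)) -` D \<inter> X) \<inter> {x\<in>X. g x = z}"
    using D(2) by auto
  ultimately show ?thesis by blast
qed

text \<open>The normaliser is \<open>n v\<^sup>2\<close> with \<open>v\<^sup>2 = (1/n) \<Sum> m\<close>, kept unsimplified as in \<open>C\<^sub>G\<close>.\<close>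
lemma normalized_cov_sum_le_weighted_effect_sum:
  fixes m :: "'a \<Rightarrow> real" and c d :: "'a \<Rightarrow> 'a \<Rightarrow> real" and E EG :: "('a \<times> 'a) set"
  assumes fin: "finite N" and v_pos: "0 < 1 / real (card N) * (\<Sum>l\<in>N. m l)"
    and m_nonneg: "\<And>j. j \<in> N \<Longrightarrow> 0 \<le> m j"
    and c_eq: "\<And>i j. i \<in> N \<Longrightarrow> j \<in> N \<Longrightarrow> (i, j) \<in> EG \<Longrightarrow>
      c i j = (if (i, j) \<in> E then m j * d i j else 0)"
    and missing_nonneg: "\<And>j. j \<in> N \<Longrightarrow> 0 \<le> (\<Sum>i\<in>{i\<in>N. (i, j) \<in> E - EG}. d i j)"
  shows "1 / (real (card N) * (1 / real (card N) * (\<Sum>l\<in>N. m l)))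
           * (\<Sum>i\<in>N. \<Sum>j\<in>{j\<in>N. (i, j) \<in> EG}. c i j)
       \<le> (\<Sum>j\<in>N. m j / (\<Sum>l\<in>N. m l) * (\<Sum>i\<in>{i\<in>N. (i, j) \<in> E}. d i j))"
proof -
  have card_pos: "0 < real (card N)" and S_pos: "0 < (\<Sum>l\<in>N. m l)"
    using v_pos by (auto simp: zero_less_divide_iff)
  have "(\<Sum>i\<in>N. \<Sum>j\<in>{j\<in>N. (i, j) \<in> EG}. c i j)
      = (\<Sum>i\<in>N. \<Sum>j\<in>N. if (i, j) \<in> E \<inter> EG then m j * d i j else 0)"
    using fin c_eq by (simp add: sum.inter_filter) (intro sum.cong; auto)
  also have "\<dots> = (\<Sum>j\<in>N. m j * (\<Sum>i\<in>{i\<in>N. (i, j) \<in> E \<inter> EG}. d i j))"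
    using fin by (subst sum.swap) (simp add: sum.inter_filter sum_distrib_left if_distrib cong: if_cong)
  also have "\<dots> \<le> (\<Sum>j\<in>N. m j * (\<Sum>i\<in>{i\<in>N. (i, j) \<in> E}. d i j))"
  proof (intro sum_mono mult_left_mono m_nonneg)
    fix j assume "j \<in> N"
    have "{i\<in>N. (i, j) \<in> E} = {i\<in>N. (i, j) \<in> E \<inter> EG} \<union> {i\<in>N. (i, j) \<in> E - EG}" by auto
    then have "(\<Sum>i\<in>{i\<in>N. (i, j) \<in> E}. d i j)
        = (\<Sum>i\<in>{i\<in>N. (i, j) \<in> E \<inter> EG}. d i j) + (\<Sum>i\<in>{i\<in>N. (i, j) \<in> E - EG}. d i j)"
      using fin by (simp add: sum.union_disjoint[symmetric]) (subst sum.union_disjoint; auto)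
    with missing_nonneg[OF \<open>j \<in> N\<close>]
    show "(\<Sum>i\<in>{i\<in>N. (i, j) \<in> E \<inter> EG}. d i j) \<le> (\<Sum>i\<in>{i\<in>N. (i, j) \<in> E}. d i j)" by simp
  qed
  finally show ?thesis
    using card_pos S_pos by (simp add: sum_divide_distrib[symmetric] divide_right_mono)
qed

locale spillover_model =
  fixes M :: "'w measure" and N :: "'a set" and X :: "'a \<Rightarrow> 'w \<Rightarrow> real ^ 'p"
    and EG E0 :: "'w \<Rightarrow> ('a \<times> 'a) set" and Y1 Y0 :: "'a \<Rightarrow> 'w \<Rightarrow> bool"
    and rho :: "'a \<Rightarrow> ('a \<Rightarrow> bool) \<Rightarrow> 'w \<Rightarrow> bool"
  assumes prob_space_M: "prob_space M"
    and finite_N: "finite N"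
    and X_meas: "\<And>i. i \<in> N \<Longrightarrow> X i \<in> borel_measurable M"
    and EG_meas: "EG \<in> measurable M (count_space UNIV)"
    and E0_meas: "E0 \<in> measurable M (count_space UNIV)"
    and Y1_meas: "\<And>i. i \<in> N \<Longrightarrow> Y1 i \<in> measurable M (count_space UNIV)"
    and Y0_meas: "\<And>j. j \<in> N \<Longrightarrow> Y0 j \<in> measurable M (count_space UNIV)"
    and Ystar_meas: "\<And>i j d. i \<in> N \<Longrightarrow> j \<in> N \<Longrightarrow>
      pot_out rho Y0 i j d \<in> measurable M (count_space UNIV)"
    and E0_edges: "\<And>w. w \<in> space M \<Longrightarrow> E0 w \<subseteq> N \<times> N"
    and Y1_rho: "\<And>i w. i \<in> N \<Longrightarrow> w \<in> space M \<Longrightarrow> Y1 i w = rho i (\<lambda>k. Y0 k w) w"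
    and unconf: "\<And>i j. i \<in> N \<Longrightarrow> j \<in> N \<Longrightarrow>
      cond_indep M (sigma_XG M N X EG)
        (\<lambda>w. if (i, j) \<in> E0 w then Some (pot_out rho Y0 i j True w, pot_out rho Y0 i j False w, E0 w)
              else None)
        (Y0 j)"
begin

abbreviation "F \<equiv> sigma_XG M N X EG"
abbreviation "F0 \<equiv> sigma_XGG M N X EG E0"
abbreviation "Ystar \<equiv> pot_out rho Y0"

sublocale prob_space M by (rule prob_space_M)

lemma measurable_covariates:
  "(\<lambda>w. (\<lambda>i\<in>N. X i w, EG w)) \<in> measurable M ((\<Pi>\<^sub>M i\<in>N. borel) \<Otimes>\<^sub>M count_space UNIV)"
  using X_meas EG_meas by (intro measurable_Pair measurable_restrict) auto

lemma covariates_funcset: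
  "(\<lambda>w. (\<lambda>i\<in>N. X i w, EG w)) \<in> space M \<rightarrow> space ((\<Pi>\<^sub>M i\<in>N. borel) \<Otimes>\<^sub>M count_space UNIV)"
  using measurable_space[OF measurable_covariates] by blast

lemma subalgebra_F0: "subalgebra M F0"
  unfolding sigma_XGG_def
  by (rule subalgebra_vimage_algebra, rule measurable_Pair[OF measurable_covariates E0_meas])

lemma subalgebra_F: "subalgebra M F"
  unfolding sigma_XG_def using measurable_covariates by (rule subalgebra_vimage_algebra)

lemma subalgebra_F0_F: "subalgebra F0 F"
  unfolding sigma_XGG_def sigma_XG_def
  by (rule subalgebra_vimage_algebra_pair[OF covariates_funcset]) simp

lemma E0_measurable_F0: "E0 \<in> measurable F0 (count_space UNIV)"
  unfolding sigma_XGG_def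
  by (rule measurable_vimage_algebra_pair(2)[OF covariates_funcset]) simp

lemma EG_measurable_F0: "EG \<in> measurable F0 (count_space UNIV)"
proof (rule measurable_from_subalg[OF subalgebra_F0_F])
  have "(\<lambda>w. \<lambda>i\<in>N. X i w) \<in> space M \<rightarrow> space (\<Pi>\<^sub>M i\<in>N. borel)"
    using covariates_funcset by (auto simp: space_pair_measure)
  then show "EG \<in> measurable F (count_space UNIV)"
    unfolding sigma_XG_def by (rule measurable_vimage_algebra_pair(2)) simp
qed

lemma F0_slice:
  assumes "B \<in> sets F0"
  shows "\<exists>C\<in>sets F. B \<inter> {w\<in>space M. E0 w = e} = C \<inter> {w\<in>space M. E0 w = e}"
  using vimage_algebra_pair_count_space_slice[OF covariates_funcset assms[unfolded sigma_XGG_def]]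
  unfolding sigma_XG_def .

sublocale F0: finite_measure_subalgebra M F0
  by unfold_locales (rule subalgebra_F0)

sublocale F: finite_measure_subalgebra M F
  by unfold_locales (rule subalgebra_F)

definition edge_potential_outcomes where
  "edge_potential_outcomes i j w =
    (if (i, j) \<in> E0 w then Some (Ystar i j True w, Ystar i j False w, E0 w) else None)"

lemma potential_outcomes_measurable:
  assumes "i \<in> N" "j \<in> N"
  shows "(\<lambda>w. (Ystar i j True w, Ystar i j False w)) \<in> measurable M (count_space UNIV)"
proof -
  have [measurable]: "Measurable.pred M (Ystar i j d)" for d by (rule Ystar_meas[OF assms])
  show ?thesis by measurable
qed

lemma edge_potential_outcomes_measurable:
  assumes "i \<in> N" "j \<in> N"
  shows "edge_potential_outcomes i j \<in> measurable M (count_space UNIV)"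
proof -
  have branch: "(\<lambda>w. if (i, j) \<in> E0 w then Some (a, b, E0 w) else None) \<in> measurable M (count_space UNIV)"
    for a b by (rule measurable_compose[OF E0_meas]) simp
  have "(\<lambda>w. (\<lambda>(a, b) w. if (i, j) \<in> E0 w then Some (a, b, E0 w) else None)
            (Ystar i j True w, Ystar i j False w) w) \<in> measurable M (count_space UNIV)"
  proof (rule measurable_compose_countable[OF _ potential_outcomes_measurable[OF assms]])
    fix ab :: "bool \<times> bool"
    show "(\<lambda>w. (\<lambda>(a, b) w. if (i, j) \<in> E0 w then Some (a, b, E0 w) else None) ab w)
        \<in> measurable M (count_space UNIV)"
      using branch[of "fst ab" "snd ab"] by (simp add: case_prod_beta)
  qed
  then show ?thesis unfolding edge_potential_outcomes_def by simp
qed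

text \<open>Since \<open>S \<subseteq> range Some\<close>, the event \<open>edge_potential_outcomes i j \<in> S\<close> determines \<open>E0\<close>,
  which is what upgrades unconfoundedness given \<open>F\<close> to a factorisation given \<open>F0\<close>.\<close>
lemma cond_exp_Y0_mult_edge_event:
  assumes ij: "i \<in> N" "j \<in> N" and S: "S \<subseteq> range Some"
  shows "AE w in M. real_cond_exp M F0 (\<lambda>x. of_bool (Y0 j x) * indicator S (edge_potential_outcomes i j x)) w
           = real_cond_exp M F (\<lambda>x. of_bool (Y0 j x)) w
             * real_cond_exp M F0 (\<lambda>x. indicator S (edge_potential_outcomes i j x)) w"
proof (rule real_cond_exp_mult_refined_by_discrete
    [OF subalgebra_F0 subalgebra_F0_F E0_meas finite_Pow_iff[THEN iffD2] _ F0_slice])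
  let ?U = "edge_potential_outcomes i j"
  have [measurable]: "Measurable.pred M (Y0 j)" by (rule Y0_meas[OF ij(2)])
  have [measurable]: "?U \<in> measurable M (count_space UNIV)"
    by (rule edge_potential_outcomes_measurable[OF ij])
  show "finite (N \<times> N)" using finite_N by simp
  show "E0 x \<in> Pow (N \<times> N)" if "x \<in> space M" for x using E0_edges[OF that] by simp
  show "(\<lambda>x. of_bool (Y0 j x)) \<in> borel_measurable M" by measurable
  show "(\<lambda>x. indicator S (?U x)) \<in> borel_measurable M"
    by (rule measurable_compose[OF _ borel_measurable_count_space]) measurable
  show "\<bar>of_bool (Y0 j x) :: real\<bar> \<le> 1" "\<bar>indicator S (?U x) :: real\<bar> \<le> 1" for x
    by (simp_all add: indicator_def)
  fix e
  define S' where "S' = S \<inter> {u. \<exists>a b. u = Some (a, b, e)}"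
  have "of_bool (E0 x = e) * indicator S (?U x) = (indicator S' (?U x) :: real)" for x
    using S by (auto simp: S'_def edge_potential_outcomes_def indicator_def)
  moreover have "of_bool (Y0 j x) = (indicator {True} (Y0 j x) :: real)" for x
    by (simp add: indicator_def)
  moreover have "AE w in M. real_cond_exp M F (\<lambda>x. indicator S' (?U x) * indicator {True} (Y0 j x)) w
      = real_cond_exp M F (\<lambda>x. indicator S' (?U x)) w * real_cond_exp M F (\<lambda>x. indicator {True} (Y0 j x)) w"
    using unconf[OF ij, unfolded cond_indep_def cond_indep_on_def, rule_format, of S' "{True}"]
    by (simp add: edge_potential_outcomes_def)
  ultimately show "AE w in M.
      real_cond_exp M F (\<lambda>x. of_bool (E0 x = e) * indicator S (?U x) * of_bool (Y0 j x)) w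
    = real_cond_exp M F (\<lambda>x. of_bool (E0 x = e) * indicator S (?U x)) w
      * real_cond_exp M F (\<lambda>x. of_bool (Y0 j x)) w"
    by simp
qed

lemma cond_exp_Y0_mult_on_edge:
  assumes ij: "i \<in> N" "j \<in> N"
  shows "AE w in M. (i, j) \<in> E0 w \<longrightarrow>
    real_cond_exp M F0 (\<lambda>x. of_bool (Y0 j x) * of_bool (P (Ystar i j True x) (Ystar i j False x))) w
    = real_cond_exp M F (\<lambda>x. of_bool (Y0 j x)) w
      * real_cond_exp M F0 (\<lambda>x. of_bool (P (Ystar i j True x) (Ystar i j False x))) w"
proof -
  define a where "a x = (of_bool ((i, j) \<in> E0 x) :: real)" for x
  define p where "p x = (of_bool (P (Ystar i j True x) (Ystar i j False x)) :: real)" for x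
  define y where "y x = (of_bool (Y0 j x) :: real)" for x
  have a_F0: "a \<in> borel_measurable F0"
    unfolding a_def by (rule measurable_compose[OF E0_measurable_F0]) simp
  have [measurable]: "a \<in> borel_measurable M"
    using measurable_from_subalg[OF subalgebra_F0 a_F0] .
  have [measurable]: "p \<in> borel_measurable M"
    using measurable_compose[OF potential_outcomes_measurable[OF ij] borel_measurable_count_space,
        of "\<lambda>(b, c). of_bool (P b c)"]
    by (simp add: p_def[abs_def])
  have [measurable]: "y \<in> borel_measurable M"
    using measurable_compose[OF Y0_meas[OF ij(2)] measurable_of_bool] by (simp add: y_def[abs_def])
  have S: "{Some (b, c, e) | b c e. P b c} \<subseteq> range Some" by blast
  have ind_eq: "indicator {Some (b, c, e) | b c e. P b c} (edge_potential_outcomes i j x) = a x * p x" for x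
    by (auto simp: indicator_def edge_potential_outcomes_def a_def p_def)
  have "(\<lambda>x. y x * (a x * p x)) = (\<lambda>x. a x * (y x * p x))" by (simp add: fun_eq_iff ac_simps)
  then have factor: "AE w in M. real_cond_exp M F0 (\<lambda>x. a x * (y x * p x)) w
      = real_cond_exp M F y w * real_cond_exp M F0 (\<lambda>x. a x * p x) w"
    using cond_exp_Y0_mult_edge_event[OF ij S] unfolding y_def[symmetric] ind_eq by simp
  have "AE w in M. real_cond_exp M F0 (\<lambda>x. a x * (y x * p x)) w = a w * real_cond_exp M F0 (\<lambda>x. y x * p x) w"
  proof (rule F0.real_cond_exp_mult[OF a_F0])
    show "integrable M (\<lambda>x. a x * (y x * p x))"
      by (rule integrable_abs_le[of _ 1]) (measurable, simp add: a_def y_def p_def)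
  qed measurable
  moreover have "AE w in M. real_cond_exp M F0 (\<lambda>x. a x * p x) w = a w * real_cond_exp M F0 p w"
  proof (rule F0.real_cond_exp_mult[OF a_F0])
    show "integrable M (\<lambda>x. a x * p x)"
      by (rule integrable_abs_le[of _ 1]) (measurable, simp add: a_def p_def)
  qed measurable
  ultimately show ?thesis using factor
    by eventually_elim (simp add: a_def y_def[abs_def] p_def[abs_def])
qed

lemma cond_exp_Y0_on_edge:
  assumes ij: "i \<in> N" "j \<in> N"
  shows "AE w in M. (i, j) \<in> E0 w \<longrightarrow>
    real_cond_exp M F0 (\<lambda>x. of_bool (Y0 j x)) w = real_cond_exp M F (\<lambda>x. of_bool (Y0 j x)) w"
proof -
  have "AE w in M. real_cond_exp M F0 (\<lambda>x. 1) w = 1"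
    by (intro F0.real_cond_exp_F_meas) auto
  with cond_exp_Y0_mult_on_edge[OF ij, of "\<lambda>_ _. True"] show ?thesis
    by eventually_elim simp
qed

lemma cond_exp_Y0_Ystar_on_edge:
  assumes ij: "i \<in> N" "j \<in> N"
  shows "AE w in M. (i, j) \<in> E0 w \<longrightarrow>
    real_cond_exp M F0 (\<lambda>x. of_bool (Y0 j x) * of_bool (Ystar i j d x)) w
    = real_cond_exp M F0 (\<lambda>x. of_bool (Y0 j x)) w * real_cond_exp M F0 (\<lambda>x. of_bool (Ystar i j d x)) w"
proof -
  have d_cases: "Ystar i j d = (\<lambda>x. if d then Ystar i j True x else Ystar i j False x)"
    by (cases d) simp_all
  show ?thesis
    using cond_exp_Y0_mult_on_edge[OF ij, of "\<lambda>b c. if d then b else c"] cond_exp_Y0_on_edge[OF ij]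
    unfolding d_cases by eventually_elim simp
qed

lemma Y1_eq_Ystar:
  assumes "i \<in> N" "w \<in> space M"
  shows "Y1 i w = Ystar i j (Y0 j w) w"
proof -
  have "(\<lambda>k. Y0 k w)(j := Y0 j w) = (\<lambda>k. Y0 k w)" by (rule ext) simp
  then show ?thesis using Y1_rho[OF assms] by (simp add: pot_out_def)
qed

lemma cond_cov_on_edge:
  assumes ij: "i \<in> N" "j \<in> N"
  shows "AE w in M. (i, j) \<in> E0 w \<longrightarrow>
    cond_cov M F0 (\<lambda>x. of_bool (Y1 i x)) (\<lambda>x. of_bool (Y0 j x)) w
    = real_cond_exp M F0 (\<lambda>x. of_bool (Y0 j x)) w * (1 - real_cond_exp M F0 (\<lambda>x. of_bool (Y0 j x)) w)
      * real_cond_exp M F0 (\<lambda>x. of_bool (Ystar i j True x) - of_bool (Ystar i j False x)) w"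
proof -
  let ?y = "\<lambda>x. of_bool (Y0 j x) :: real" and ?t = "\<lambda>d x. of_bool (Ystar i j d x) :: real"
  have [measurable]: "Measurable.pred M (Y0 j)" "Measurable.pred M (Y1 i)" "Measurable.pred M (Ystar i j d)"
    for d by (fact Y0_meas[OF ij(2)] Y1_meas[OF ij(1)] Ystar_meas[OF ij])+
  have int: "integrable M (?t d)" "integrable M (\<lambda>x. ?y x * ?t d x)" for d
    by (rule integrable_abs_le[of _ 1]; measurable?; simp)+
  have Y1_split: "of_bool (Y1 i x) * ?y x = ?y x * ?t True x"
    "of_bool (Y1 i x) = ?y x * ?t True x + (?t False x - ?y x * ?t False x)"
    if "x \<in> space M" for x
    using Y1_eq_Ystar[OF ij(1) that, of j] by (cases "Y0 j x"; simp)+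
  have "AE w in M. real_cond_exp M F0 (\<lambda>x. of_bool (Y1 i x) * ?y x) w
      = real_cond_exp M F0 (\<lambda>x. ?y x * ?t True x) w"
    using Y1_split(1) by (intro F0.real_cond_exp_cong) auto
  moreover have "AE w in M. real_cond_exp M F0 (\<lambda>x. of_bool (Y1 i x)) w
      = real_cond_exp M F0 (\<lambda>x. ?y x * ?t True x + (?t False x - ?y x * ?t False x)) w"
    using Y1_split(2) by (intro F0.real_cond_exp_cong) auto
  moreover have "AE w in M. real_cond_exp M F0 (\<lambda>x. ?y x * ?t True x + (?t False x - ?y x * ?t False x)) w
      = real_cond_exp M F0 (\<lambda>x. ?y x * ?t True x) w
        + (real_cond_exp M F0 (?t False) w - real_cond_exp M F0 (\<lambda>x. ?y x * ?t False x) w)"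
    using F0.real_cond_exp_add[OF int(2)[of True] Bochner_Integration.integrable_diff[OF int(1)[of False] int(2)[of False]]]
      F0.real_cond_exp_diff[OF int(1,2), of False False]
    by eventually_elim simp
  moreover have "AE w in M. real_cond_exp M F0 (\<lambda>x. ?t True x - ?t False x) w
      = real_cond_exp M F0 (?t True) w - real_cond_exp M F0 (?t False) w"
    by (rule F0.real_cond_exp_diff[OF int(1)[of True] int(1)[of False]])
  ultimately show ?thesis
    using cond_exp_Y0_Ystar_on_edge[OF ij, of True] cond_exp_Y0_Ystar_on_edge[OF ij, of False]
  proof eventually_elim
    case (elim w)
    show ?case
    proof
      assume "(i, j) \<in> E0 w"
      with elim show "cond_cov M F0 (\<lambda>x. of_bool (Y1 i x)) ?y w
        = real_cond_exp M F0 ?y w * (1 - real_cond_exp M F0 ?y w)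
          * real_cond_exp M F0 (\<lambda>x. ?t True x - ?t False x) w"
        unfolding cond_cov_def by (simp only:) (simp add: algebra_simps)
    qed
  qed
qed

lemma cond_cov_off_edge:
  assumes DCG: "dynamic_causal_graph M F0 N E0 Y1 Y0"
    and ij: "i \<in> N" "j \<in> N" "i \<noteq> j"
  shows "AE w in M. (i, j) \<notin> E0 w \<longrightarrow>
    cond_cov M F0 (\<lambda>x. of_bool (Y1 i x)) (\<lambda>x. of_bool (Y0 j x)) w = 0"
proof -
  have "AE w in M. \<forall>e\<in>Pow (N \<times> N). E0 w = e \<longrightarrow> (i, j) \<notin> e \<longrightarrow>
          cond_cov M F0 (\<lambda>x. of_bool (Y1 i x)) (\<lambda>x. of_bool (Y0 j x)) w = 0"
  proof (rule AE_finite_allI)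
    show "finite (Pow (N \<times> N))" using finite_N by simp
    fix e
    show "AE w in M. E0 w = e \<longrightarrow> (i, j) \<notin> e \<longrightarrow>
            cond_cov M F0 (\<lambda>x. of_bool (Y1 i x)) (\<lambda>x. of_bool (Y0 j x)) w = 0"
    proof (cases "(i, j) \<in> e")
      case False
      then have "(nbh_set_bar e {i} \<union> {}) \<inter> (nbh_set_bar e {} \<union> {j}) = {}"
        using ij(3) by (auto simp: nbh_set_bar_def nbh_def)
      then have "cond_indep_on M F0 (\<lambda>w. E0 w = e)
          (\<lambda>w. (restrict (\<lambda>k. Y1 k w) {i}, restrict (\<lambda>k. Y0 k w) ({} \<union> nbh_set_bar e {i})))
          (\<lambda>w. (restrict (\<lambda>k. Y1 k w) {}, restrict (\<lambda>k. Y0 k w) ({j} \<union> nbh_set_bar e {})))"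
        using DCG[unfolded dynamic_causal_graph_def, THEN spec[of _ "{i}"], THEN spec[of _ "{}"],
            THEN spec[of _ "{}"], THEN spec[of _ "{j}"], THEN spec[of _ e]] ij
        by auto
      from this[unfolded cond_indep_on_def, rule_format, of "{p. fst p i}" "{p. snd p j}"]
      show ?thesis by (auto simp: cond_cov_def indicator_def elim!: eventually_mono)
    qed simp
  qed
  then show ?thesis
    using AE_space by eventually_elim (use E0_edges in blast)
qed

lemma cond_cov_decomposition:
  assumes "dynamic_causal_graph M F0 N E0 Y1 Y0"
  shows "AE w in M. \<forall>i\<in>N. \<forall>j\<in>N. i \<noteq> j \<longrightarrow>
    cond_cov M F0 (\<lambda>x. of_bool (Y1 i x)) (\<lambda>x. of_bool (Y0 j x)) w
    = (if (i, j) \<in> E0 w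
       then real_cond_exp M F0 (\<lambda>x. of_bool (Y0 j x)) w * (1 - real_cond_exp M F0 (\<lambda>x. of_bool (Y0 j x)) w)
            * real_cond_exp M F0 (\<lambda>x. of_bool (Ystar i j True x) - of_bool (Ystar i j False x)) w
       else 0)"
proof (intro AE_finite_allI[OF finite_N])
  fix i j assume "i \<in> N" "j \<in> N"
  with cond_cov_on_edge cond_cov_off_edge[OF assms]
  show "AE w in M. i \<noteq> j \<longrightarrow> cond_cov M F0 (\<lambda>x. of_bool (Y1 i x)) (\<lambda>x. of_bool (Y0 j x)) w
    = (if (i, j) \<in> E0 w
       then real_cond_exp M F0 (\<lambda>x. of_bool (Y0 j x)) w * (1 - real_cond_exp M F0 (\<lambda>x. of_bool (Y0 j x)) w)
            * real_cond_exp M F0 (\<lambda>x. of_bool (Ystar i j True x) - of_bool (Ystar i j False x)) w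
       else 0)"
    by (cases "i = j") (auto elim!: eventually_mono[OF AE_conjI])
qed

lemma cond_exp_spillover_nonneg:
  assumes j: "j \<in> N"
    and spill: "AE w in M. 0 \<le> (\<Sum>i\<in>{i\<in>N. (i, j) \<in> E0 w - EG w}.
                               of_bool (Ystar i j True w) - of_bool (Ystar i j False w) :: real)"
  shows "AE w in M. 0 \<le> (\<Sum>i\<in>{i\<in>N. (i, j) \<in> E0 w - EG w}.
    real_cond_exp M F0 (\<lambda>x. of_bool (Ystar i j True x) - of_bool (Ystar i j False x)) w)"
proof -
  \<comment> \<open>The conjunct \<open>i \<in> N\<close> makes \<open>b i * \<delta> i\<close> vanish where \<open>Ystar i j\<close> need not be
    measurable, so that the library's sum rule for conditional expectations applies.\<close>
  define b where "b i x = (of_bool (i \<in> N \<and> (i, j) \<in> E0 x - EG x) :: real)" for i x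
  define \<delta> where "\<delta> i x = (of_bool (Ystar i j True x) - of_bool (Ystar i j False x) :: real)" for i x
  have [measurable]: "Measurable.pred F0 (\<lambda>x. e \<in> E0 x)" "Measurable.pred F0 (\<lambda>x. e \<in> EG x)" for e
    by (rule measurable_compose[OF E0_measurable_F0], simp, rule measurable_compose[OF EG_measurable_F0], simp)
  have b_F0: "b i \<in> borel_measurable F0" for i
    unfolding b_def[abs_def] by measurable
  have sum_eq: "(\<Sum>i\<in>{i\<in>N. (i, j) \<in> E0 x - EG x}. h i) = (\<Sum>i\<in>N. b i x * h i)" for x and h :: "'a \<Rightarrow> real"
    unfolding sum.inter_filter[OF finite_N] by (intro sum.cong refl) (simp add: b_def)
  have b\<delta>_M: "(\<lambda>x. b i x * \<delta> i x) \<in> borel_measurable M" for i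
  proof (cases "i \<in> N")
    case True
    have [measurable]: "Measurable.pred M (Ystar i j d)" for d by (rule Ystar_meas[OF True j])
    show ?thesis
      using measurable_from_subalg[OF subalgebra_F0 b_F0] unfolding \<delta>_def[abs_def] by measurable
  qed (simp add: b_def)
  have b\<delta>_int: "integrable M (\<lambda>x. b i x * \<delta> i x)" for i
    by (rule integrable_abs_le[OF b\<delta>_M, where c=1]) (simp add: b_def \<delta>_def)
  have "AE w in M. 0 \<le> real_cond_exp M F0 (\<lambda>x. \<Sum>i\<in>N. b i x * \<delta> i x) w"
    using spill b\<delta>_M unfolding sum_eq \<delta>_def by (intro F0.real_cond_exp_pos) auto
  moreover have "AE w in M. real_cond_exp M F0 (\<lambda>x. \<Sum>i\<in>N. b i x * \<delta> i x) w
      = (\<Sum>i\<in>N. real_cond_exp M F0 (\<lambda>x. b i x * \<delta> i x) w)"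
    by (rule F0.real_cond_exp_sum[OF b\<delta>_int])
  moreover have "AE w in M. \<forall>i\<in>N. real_cond_exp M F0 (\<lambda>x. b i x * \<delta> i x) w
      = b i w * real_cond_exp M F0 (\<delta> i) w"
  proof (rule AE_finite_allI[OF finite_N])
    fix i assume i: "i \<in> N"
    have [measurable]: "Measurable.pred M (Ystar i j d)" for d by (rule Ystar_meas[OF i j])
    show "AE w in M. real_cond_exp M F0 (\<lambda>x. b i x * \<delta> i x) w = b i w * real_cond_exp M F0 (\<delta> i) w"
      by (rule F0.real_cond_exp_mult[OF b_F0 _ b\<delta>_int]) (simp add: \<delta>_def[abs_def])
  qed
  ultimately show ?thesis
    unfolding sum_eq by eventually_elim (simp add: \<delta>_def[abs_def])
qed

end

theorem lemma2:
  fixes M :: "'w measure" and N :: "'a set"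
    and X :: "'a \<Rightarrow> 'w \<Rightarrow> real ^ 'p"
    and EG E0 :: "'w \<Rightarrow> ('a \<times> 'a) set"
    and Y1 Y0 :: "'a \<Rightarrow> 'w \<Rightarrow> bool"
    and rho :: "'a \<Rightarrow> ('a \<Rightarrow> bool) \<Rightarrow> 'w \<Rightarrow> bool"
  defines "F \<equiv> sigma_XG M N X EG"
    and "F0 \<equiv> sigma_XGG M N X EG E0"
    and "Ystar \<equiv> pot_out rho Y0"
  defines "mu \<equiv> (\<lambda>j w. real_cond_exp M F0 (\<lambda>x. of_bool (Y0 j x)) w)"
  defines "v2 \<equiv> (\<lambda>w. (1 / real (card N)) * (\<Sum>j\<in>N. mu j w * (1 - mu j w)))"
  defines "wt \<equiv> (\<lambda>j w. mu j w * (1 - mu j w) / (\<Sum>l\<in>N. mu l w * (1 - mu l w)))"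
  defines "tau \<equiv> (\<lambda>j w. \<Sum>i\<in>{i\<in>N. (i, j) \<in> E0 w}.
              real_cond_exp M F0 (\<lambda>x. of_bool (Ystar i j True x) - of_bool (Ystar i j False x)) w)"
  defines "D \<equiv> (\<lambda>w. \<Sum>j\<in>N. wt j w * tau j w)"
  defines "CG \<equiv> (\<lambda>w. (1 / (real (card N) * v2 w)) *
              (\<Sum>i\<in>N. \<Sum>j\<in>{j\<in>N. (i, j) \<in> EG w}.
                 cond_cov M F0 (\<lambda>x. of_bool (Y1 i x)) (\<lambda>x. of_bool (Y0 j x)) w))"
  assumes prob: "prob_space M"
    and finN: "finite N"
    and X_meas: "\<And>i. i \<in> N \<Longrightarrow> X i \<in> borel_measurable M"
    and EG_meas: "EG \<in> measurable M (count_space UNIV)"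
    and E0_meas: "E0 \<in> measurable M (count_space UNIV)"
    and Y1_meas: "\<And>i. i \<in> N \<Longrightarrow> Y1 i \<in> measurable M (count_space UNIV)"
    and Y0_meas: "\<And>j. j \<in> N \<Longrightarrow> Y0 j \<in> measurable M (count_space UNIV)"
    and Ystar_meas: "\<And>i j d. i \<in> N \<Longrightarrow> j \<in> N \<Longrightarrow> Ystar i j d \<in> measurable M (count_space UNIV)"
    and EG_edges: "\<And>w. w \<in> space M \<Longrightarrow> EG w \<subseteq> {(i, j). i \<in> N \<and> j \<in> N \<and> i \<noteq> j}"
    and E0_edges: "\<And>w. w \<in> space M \<Longrightarrow> E0 w \<subseteq> {(i, j). i \<in> N \<and> j \<in> N \<and> i \<noteq> j}"
    and rho_local: "\<And>i y y' w. i \<in> N \<Longrightarrow> w \<in> space M \<Longrightarrow>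
        (\<forall>k\<in>nbh_set_bar (E0 w) {i}. y k = y' k) \<Longrightarrow> rho i y w = rho i y' w"
    and Y1_rho: "\<And>i w. i \<in> N \<Longrightarrow> w \<in> space M \<Longrightarrow> Y1 i w = rho i (\<lambda>k. Y0 k w) w"
    and DCG: "dynamic_causal_graph M F0 N E0 Y1 Y0"
    and v2_pos: "AE w in M. v2 w > 0"
    and unconf: "\<And>i j. i \<in> N \<Longrightarrow> j \<in> N \<Longrightarrow>
        cond_indep M F
          (\<lambda>w. if (i, j) \<in> E0 w then Some (Ystar i j True w, Ystar i j False w, E0 w) else None)
          (Y0 j)"
    and nonneg_spill: "\<And>j. j \<in> N \<Longrightarrow>
        AE w in M. 0 \<le> (\<Sum>i\<in>{i\<in>N. (i, j) \<in> E0 w - EG w}.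
                          of_bool (Ystar i j True w) - of_bool (Ystar i j False w) :: real)"
  shows "AE w in M. D w \<ge> CG w"
proof -
  interpret spillover_model M N X EG E0 Y1 Y0 rho
  proof (rule spillover_model.intro)
    show "E0 w \<subseteq> N \<times> N" if "w \<in> space M" for w using E0_edges[OF that] by blast
  qed (fact prob finN X_meas EG_meas E0_meas Y1_meas Y0_meas Y1_rho Ystar_meas[unfolded Ystar_def]
        unconf[unfolded F_def Ystar_def])+
  have "AE w in M. \<forall>j\<in>N. 0 \<le> (\<Sum>i\<in>{i\<in>N. (i, j) \<in> E0 w - EG w}.
      real_cond_exp M F0 (\<lambda>x. of_bool (Ystar i j True x) - of_bool (Ystar i j False x)) w)"
    using cond_exp_spillover_nonneg nonneg_spill unfolding F0_def Ystar_def
    by (intro AE_finite_allI[OF finN]) blast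
  moreover have "AE w in M. \<forall>j\<in>N. 0 \<le> mu j w \<and> mu j w \<le> 1"
    unfolding mu_def F0_def using Y0_meas
    by (intro AE_finite_allI[OF finN] F0.real_cond_exp_bounds) (auto intro: measurable_compose)
  moreover note cond_cov_decomposition[OF DCG[unfolded F0_def]]
  ultimately show ?thesis using v2_pos AE_space
  proof eventually_elim
    case (elim w)
    then show ?case
      unfolding CG_def D_def wt_def tau_def v2_def mu_def F0_def Ystar_def
      by (intro normalized_cov_sum_le_weighted_effect_sum[OF finN])
         (use EG_edges[OF elim(5)] in \<open>auto simp: mu_def F0_def\<close>)
  qed
qed

end
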